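(* Let $T$ be an array and let $s, n_1, n_2 \ge 0$ be integers such that positions $s,\dots,s+n_1-1$ of $T$ hold a list $A$ of $n_1$ distinct elements and positions $s+n_1,\dots,s+n_1+n_2-1$ hold a list $B$ of $n_2$ further distinct elements. Suppose $A$ and $B$ are randomly shuffled, i.e. each is in a uniformly random order, independently of each other and of the random bits and random integers drawn by the procedure. Then after running $\textsc{Merge}(T,s,n_1,n_2)$ (defined in the context), positions $s,\dots,s+n_1+n_2-1$ of $T$ hold a randomly shuffled union $C$ of $A$ and $B$, i.e. the $n=n_1+n_2$ elements in a uniformly random order.
   Context: The procedure $\textsc{Merge}(T,s,n_1,n_2)$: set $i\gets s$, $j\gets s+n_1$, $n\gets s+n_1+n_2$. Repeat: draw an independent fair random bit; if it is $0$, then break out of the loop if $i=j$; if it is $1$, then break out of the loop if $j=n$, and otherwise swap $T[i]$ and $T[j]$ and set $j\gets j+1$; in either non-breaking case set $i\gets i+1$. After the loop, while $i<n$: draw an integer $m$ uniformly at random from $\{s,\dots,i\}$ (independently of everything else), swap $T[i]$ and $T[m]$, and set $i\gets i+1$. *)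

theory Defs
  imports "HOL-Probability.Probability" "HOL-Combinatorics.Multiset_Permutations"
begin

text \<open>Arrays are modelled as lists; positions are 0-based list indices.\<close>

definition list_swap :: "'a list \<Rightarrow> nat \<Rightarrow> nat \<Rightarrow> 'a list" where
  "list_swap T i j = T[i := T ! j, j := T ! i]"

text \<open>A fair random bit: True = bit 1, False = bit 0.\<close>
definition fair_bit :: "bool pmf" where
  "fair_bit = bernoulli_pmf (1/2)"

text \<open>The outer guard i \<le> j \<le> n is an invariant of the loop started from
  i = s, j = s + n1, n = s + n1 + n2, so it never fires in Merge; it only
  makes the function total for arbitrary arguments.\<close>
function merge_loop1 :: "'a list \<Rightarrow> nat \<Rightarrow> nat \<Rightarrow> nat \<Rightarrow> ('a list \<times> nat) pmf" where
  "merge_loop1 T i j n =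
     (if i \<le> j \<and> j \<le> n then
        bind_pmf fair_bit (\<lambda>b.
          if \<not> b then
            (if i = j then return_pmf (T, i) else merge_loop1 T (i + 1) j n)
          else
            (if j = n then return_pmf (T, i)
             else merge_loop1 (list_swap T i j) (i + 1) (j + 1) n))
      else return_pmf (T, i))"
  by pat_completeness auto
termination
  by (relation "measures [\<lambda>(T, i, j, n). n - j, \<lambda>(T, i, j, n). j - i]") auto

function merge_loop2 :: "'a list \<Rightarrow> nat \<Rightarrow> nat \<Rightarrow> nat \<Rightarrow> 'a list pmf" where
  "merge_loop2 T s i n =
     (if i < n then
        bind_pmf (pmf_of_set {s..i}) (\<lambda>m. merge_loop2 (list_swap T i m) s (i + 1) n)
      else return_pmf T)"
  by pat_completeness auto
termination
  by (relation "Wellfounded.measure (\<lambda>(T, s, i, n). n - i)") auto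

definition Merge :: "'a list \<Rightarrow> nat \<Rightarrow> nat \<Rightarrow> nat \<Rightarrow> 'a list pmf" where
  "Merge T s n1 n2 =
     bind_pmf (merge_loop1 T s (s + n1) (s + n1 + n2))
       (\<lambda>(T', i). merge_loop2 T' s i (s + n1 + n2))"

definition shuffled :: "'a set \<Rightarrow> 'a list pmf" where
  "shuffled S = pmf_of_set (permutations_of_set S)"

end

theory Submission
  imports Defs
begin

text \<open>Record the bits drawn by the first loop as a history \<open>w\<close>. Averaged over the two shuffles,
  the first loop does not care where the elements of \<open>A\<close> not yet placed sit, since a bit 1 only
  rotates them; so after the history \<open>w\<close>, with \<open>x\<close> zeros and \<open>y\<close> ones, the array is in distribution
  the interleaving along \<open>w\<close> of the first \<open>x\<close> elements of \<open>A\<close> with the first \<open>y\<close> elements of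
  \<open>B\<close>, followed by the remaining elements. The loop stops after \<open>w\<close> with a probability that
  depends only on \<open>x\<close> and \<open>y\<close>, so given the counts the stopping history is uniform among the
  words with \<open>x\<close> zeros and \<open>y\<close> ones, and interleaving two shuffles along such a uniform word
  yields a uniform shuffle of their union. The second loop is the inside-out Fisher--Yates
  shuffle, which extends a uniform shuffle of the prefix to a uniform shuffle of the whole
  segment.\<close>

declare merge_loop1.simps[simp del] merge_loop2.simps[simp del]

lemma pmf_of_set_Times:
  assumes "finite A" "A \<noteq> {}" "finite B" "B \<noteq> {}"
  shows "pmf_of_set (A \<times> B) = pair_pmf (pmf_of_set A) (pmf_of_set B)"
  by (rule pmf_eqI) (auto simp: pmf_pair card_cartesian_product assms indicator_def)

lemma pmf_of_set_atLeastAtMost_shift: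
  "pmf_of_set {s..s + k} = map_pmf ((+) s) (pmf_of_set {0..k::nat})"
proof -
  have "(+) s ` {0..k} = {s..s + k}"
    by (auto simp: image_iff intro!: bexI[where x = "_ - s"])
  then show ?thesis
    by (subst map_pmf_of_set_inj) (auto simp: add.commute)
qed

lemma set_pmf_shuffled [simp]: "finite S \<Longrightarrow> set_pmf (shuffled S) = permutations_of_set S"
  by (simp add: shuffled_def)

lemma permutations_of_set_mset_eq:
  "mset xs = mset ys \<Longrightarrow> ys \<in> permutations_of_set S \<Longrightarrow> xs \<in> permutations_of_set S"
  unfolding permutations_of_set_def
  by (metis mem_Collect_eq mset_eq_imp_distinct_iff mset_eq_setD)

lemma length_list_swap [simp]: "length (list_swap T i j) = length T"
  by (simp add: list_swap_def)

lemma list_swap_same [simp]: "list_swap T i i = T"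
  by (simp add: list_swap_def)

lemma mset_list_swap:
  "i < length T \<Longrightarrow> j < length T \<Longrightarrow> mset (list_swap T i j) = mset T"
  unfolding list_swap_def using mset_swap[of j T i] by simp

lemma list_swap_in_permutations_of_set:
  "T \<in> permutations_of_set S \<Longrightarrow> i < length T \<Longrightarrow> j < length T \<Longrightarrow>
   list_swap T i j \<in> permutations_of_set S"
  by (rule permutations_of_set_mset_eq[OF mset_list_swap])

lemma nth_list_swap_right:
  "i < length T \<Longrightarrow> j < length T \<Longrightarrow> list_swap T i j ! j = T ! i"
  by (simp add: list_swap_def)

lemma list_swap_list_swap:
  "i < length T \<Longrightarrow> j < length T \<Longrightarrow> list_swap (list_swap T i j) i j = T"
  unfolding list_swap_def
  by (cases "i = j") (auto simp: nth_list_update list_update_swap intro!: nth_equalityI)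

lemma list_swap_append_shift:
  "i < length X \<Longrightarrow> j < length X \<Longrightarrow>
   list_swap (L @ X @ Y) (length L + i) (length L + j) = L @ list_swap X i j @ Y"
  unfolding list_swap_def by (simp add: list_update_append nth_append)

lemma list_swap_Cons_append_Cons:
  "list_swap (P @ u # M @ v # Q) (length P) (length P + 1 + length M) = P @ v # M @ u # Q"
  unfolding list_swap_def by (simp add: list_update_append nth_append)

subsection \<open>The second loop: inside-out Fisher--Yates shuffling\<close>

lemma shuffled_insert_swap:
  assumes "finite S" "z \<notin> S"
  shows "bind_pmf (shuffled S) (\<lambda>P. map_pmf (list_swap (P @ [z]) (card S)) (pmf_of_set {0..card S}))
         = shuffled (insert z S)"
proof -
  define k where "k = card S"
  define D where "D = permutations_of_set S \<times> {0..k}"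
  define g where "g = (\<lambda>(P, m). list_swap (P @ [z]) k m)"
  have length_P: "length P = k" if "P \<in> permutations_of_set S" for P
    using that by (simp add: k_def length_finite_permutations_of_set)
  have snoc_z: "P @ [z] \<in> permutations_of_set (insert z S)" if "P \<in> permutations_of_set S" for P
    using that assms by (auto simp: permutations_of_set_def)
  have g_perm: "g (P, m) \<in> permutations_of_set (insert z S)" and g_z: "g (P, m) ! m = z"
    if "(P, m) \<in> D" for P m
    using that list_swap_in_permutations_of_set[OF snoc_z] nth_list_swap_right[of k "P @ [z]" m]
    by (auto simp: D_def g_def length_P nth_append)
  have "inj_on g D"
  proof (rule inj_onI, clarify)
    fix P m P' m' assume in_D: "(P, m) \<in> D" "(P', m') \<in> D" and eq: "g (P, m) = g (P', m')"
    \<comment> \<open>The position of \<open>z\<close> determines \<open>m\<close>; undoing the swap then recovers \<open>P\<close>.\<close>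
    have "distinct (g (P, m))" "length (g (P, m)) = Suc k"
      using g_perm[OF in_D(1)] in_D by (auto simp: D_def g_def length_P permutations_of_set_def)
    then have "m = m'"
      using g_z[OF in_D(1)] g_z[OF in_D(2)] in_D eq
      by (metis D_def SigmaE atLeastAtMost_iff le_imp_less_Suc nth_eq_iff_index_eq prod.inject)
    have "P @ [z] = list_swap (g (P, m)) k m"
      using list_swap_list_swap[of k "P @ [z]" m] in_D by (simp add: D_def g_def length_P)
    also have "\<dots> = list_swap (g (P', m')) k m'"
      using eq \<open>m = m'\<close> by simp
    also have "\<dots> = P' @ [z]"
      using list_swap_list_swap[of k "P' @ [z]" m'] in_D by (simp add: D_def g_def length_P)
    finally show "P = P' \<and> m = m'"
      using \<open>m = m'\<close> by simp
  qed
  moreover have "g ` D = permutations_of_set (insert z S)"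
  proof (rule card_subset_eq)
    show "g ` D \<subseteq> permutations_of_set (insert z S)"
      using g_perm by auto
    show "card (g ` D) = card (permutations_of_set (insert z S))"
      using \<open>inj_on g D\<close> assms by (simp add: card_image D_def k_def fact_Suc)
  qed simp
  moreover have "D \<noteq> {}" "finite D"
    using assms by (auto simp: D_def)
  ultimately have "map_pmf g (pmf_of_set D) = shuffled (insert z S)"
    by (simp add: map_pmf_of_set_inj shuffled_def)
  moreover have "map_pmf g (pmf_of_set D) =
      bind_pmf (shuffled S) (\<lambda>P. map_pmf (list_swap (P @ [z]) k) (pmf_of_set {0..k}))"
    using assms
    by (simp add: D_def pmf_of_set_Times pair_pmf_def g_def shuffled_def map_pmf_def
        bind_assoc_pmf bind_return_pmf)
  ultimately show ?thesis
    by (simp add: k_def)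
qed

lemma merge_loop2_Cons:
  assumes "length P = k"
  shows "merge_loop2 (L @ P @ z # Z @ R) (length L) (length L + k) (length L + k + Suc (length Z)) =
    bind_pmf (map_pmf (list_swap (P @ [z]) k) (pmf_of_set {0..k}))
      (\<lambda>P'. merge_loop2 (L @ P' @ Z @ R) (length L) (length L + Suc k) (length L + Suc k + length Z))"
proof -
  have "list_swap (L @ (P @ [z]) @ Z @ R) (length L + k) (length L + m) = L @ list_swap (P @ [z]) k m @ Z @ R"
    if "m \<in> {0..k}" for m
    using that assms by (intro list_swap_append_shift) auto
  then show ?thesis
    by (subst merge_loop2.simps)
       (auto simp: pmf_of_set_atLeastAtMost_shift bind_map_pmf intro!: bind_pmf_cong)
qed

lemma merge_loop2_shuffled:
  assumes "finite S" "distinct Z" "set Z \<inter> S = {}"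
  shows "map_pmf (\<lambda>T. take (card S + length Z) (drop (length L) T))
           (bind_pmf (shuffled S) (\<lambda>P.
              merge_loop2 (L @ P @ Z @ R) (length L) (length L + card S) (length L + card S + length Z)))
         = shuffled (S \<union> set Z)"
  using assms
proof (induction Z arbitrary: S)
  case Nil
  have "bind_pmf (shuffled S) (\<lambda>P. merge_loop2 (L @ P @ [] @ R) (length L) (length L + card S)
          (length L + card S + length [])) = map_pmf (\<lambda>P. L @ P @ R) (shuffled S)"
    by (simp add: merge_loop2.simps map_pmf_def)
  moreover have "map_pmf (\<lambda>T. take (card S) (drop (length L) T)) (map_pmf (\<lambda>P. L @ P @ R) (shuffled S))
      = map_pmf id (shuffled S)"
    unfolding pmf.map_comp
    by (rule map_pmf_cong) (use Nil in \<open>auto simp: length_finite_permutations_of_set\<close>)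
  ultimately show ?case
    by simp
next
  case (Cons z Z)
  have card_insert: "card (insert z S) = Suc (card S)"
    using Cons.prems by simp
  have "bind_pmf (shuffled S) (\<lambda>P. merge_loop2 (L @ P @ (z # Z) @ R) (length L) (length L + card S)
          (length L + card S + length (z # Z)))
      = bind_pmf (bind_pmf (shuffled S) (\<lambda>P.
            map_pmf (list_swap (P @ [z]) (card S)) (pmf_of_set {0..card S})))
          (\<lambda>P'. merge_loop2 (L @ P' @ Z @ R) (length L) (length L + card (insert z S))
             (length L + card (insert z S) + length Z))"
    unfolding bind_assoc_pmf
  proof (intro bind_pmf_cong refl)
    fix P assume "P \<in> set_pmf (shuffled S)"
    then have "length P = card S"
      using Cons.prems by (simp add: length_finite_permutations_of_set)
    from merge_loop2_Cons[OF this, of L z Z R]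
    show "merge_loop2 (L @ P @ (z # Z) @ R) (length L) (length L + card S)
            (length L + card S + length (z # Z)) =
          bind_pmf (map_pmf (list_swap (P @ [z]) (card S)) (pmf_of_set {0..card S}))
            (\<lambda>P'. merge_loop2 (L @ P' @ Z @ R) (length L) (length L + card (insert z S))
               (length L + card (insert z S) + length Z))"
      by (simp add: card_insert)
  qed
  also have "\<dots> = bind_pmf (shuffled (insert z S)) (\<lambda>P'. merge_loop2 (L @ P' @ Z @ R) (length L)
          (length L + card (insert z S)) (length L + card (insert z S) + length Z))"
    using Cons.prems by (simp add: shuffled_insert_swap)
  finally show ?case
    using Cons.IH[of "insert z S"] Cons.prems card_insert by simp
qed

subsection \<open>Splitting off a suffix of a random permutation\<close>

definition distinct_lists :: "'a set \<Rightarrow> nat \<Rightarrow> 'a list set" where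
  "distinct_lists S m = {Z. distinct Z \<and> set Z \<subseteq> S \<and> length Z = m}"

lemma finite_distinct_lists: "finite S \<Longrightarrow> finite (distinct_lists S m)"
  by (rule finite_subset[OF _ finite_lists_length_eq[of S m]]) (auto simp: distinct_lists_def)

lemma distinct_lists_nonempty:
  assumes "finite S" "m \<le> card S"
  shows "distinct_lists S m \<noteq> {}"
proof -
  obtain A where "A \<in> permutations_of_set S"
    using assms(1) by (metis permutations_of_set_empty_iff ex_in_conv)
  then have "drop (card S - m) A \<in> distinct_lists S m"
    using assms length_finite_permutations_of_set[of A S]
    unfolding distinct_lists_def permutations_of_set_def by (auto dest: in_set_dropD)
  then show ?thesis
    by blast
qed

lemma permutations_of_set_eq_UN_suffix:
  assumes "finite S" "m \<le> card S"
  shows "permutations_of_set S =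
           (\<Union>Z\<in>distinct_lists S m. (\<lambda>P. P @ Z) ` permutations_of_set (S - set Z))"
proof (intro equalityI subsetI)
  fix A assume A: "A \<in> permutations_of_set S"
  define Z where "Z = drop (card S - m) A"
  have "length A = card S" "distinct A" "set A = S"
    using A assms by (auto simp: length_finite_permutations_of_set permutations_of_set_def)
  then have "Z \<in> distinct_lists S m"
    using assms by (auto simp: Z_def distinct_lists_def dest: in_set_dropD)
  moreover have "take (card S - m) A \<in> permutations_of_set (S - set Z)"
    using \<open>distinct A\<close> \<open>set A = S\<close> set_take_disj_set_drop_if_distinct[of A "card S - m" "card S - m"]
      set_append[of "take (card S - m) A" Z]
    unfolding Z_def permutations_of_set_def by auto
  moreover have "A = take (card S - m) A @ Z"
    by (simp add: Z_def)
  ultimately show "A \<in> (\<Union>Z\<in>distinct_lists S m. (\<lambda>P. P @ Z) ` permutations_of_set (S - set Z))"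
    by blast
qed (auto simp: permutations_of_set_def distinct_lists_def)

lemma shuffled_split_suffix:
  assumes "finite S" "m \<le> card S"
  shows "shuffled S = bind_pmf (pmf_of_set (distinct_lists S m))
           (\<lambda>Z. map_pmf (\<lambda>P. P @ Z) (shuffled (S - set Z)))"
proof -
  have card_suffix: "card ((\<lambda>P. P @ Z) ` permutations_of_set (S - set Z)) = fact (card S - m)"
    if "Z \<in> distinct_lists S m" for Z
  proof -
    have "card (S - set Z) = card S - m"
      using that assms(1) by (simp add: distinct_lists_def card_Diff_subset distinct_card)
    then show ?thesis
      using assms(1) by (simp add: card_image inj_on_def)
  qed
  have disjoint: "disjoint_family_on (\<lambda>Z. (\<lambda>P. P @ Z) ` permutations_of_set (S - set Z))
                    (distinct_lists S m)"
    unfolding disjoint_family_on_def distinct_lists_def by (auto simp: append_eq_append_conv)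
  have "shuffled S = bind_pmf (pmf_of_set (distinct_lists S m))
          (\<lambda>Z. pmf_of_set ((\<lambda>P. P @ Z) ` permutations_of_set (S - set Z)))"
    unfolding shuffled_def permutations_of_set_eq_UN_suffix[OF assms]
  proof (rule pmf_of_set_UN)
    show "finite (\<Union>Z\<in>distinct_lists S m. (\<lambda>P. P @ Z) ` permutations_of_set (S - set Z))"
      using finite_distinct_lists[OF assms(1)] by simp
    show "(\<lambda>P. P @ Z) ` permutations_of_set (S - set Z) \<noteq> {}" for Z
      using assms(1) by simp
  qed (fact distinct_lists_nonempty[OF assms], erule card_suffix, fact disjoint)
  also have "\<dots> = bind_pmf (pmf_of_set (distinct_lists S m))
                      (\<lambda>Z. map_pmf (\<lambda>P. P @ Z) (shuffled (S - set Z)))"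
    using assms(1) by (intro bind_pmf_cong refl) (simp add: shuffled_def map_pmf_of_set_inj inj_on_def)
  finally show ?thesis .
qed

subsection \<open>Interleaving two lists along a bit word\<close>

fun interleave :: "bool list \<Rightarrow> 'a list \<Rightarrow> 'a list \<Rightarrow> 'a list" where
  "interleave [] xs ys = []"
| "interleave (False # w) xs ys = hd xs # interleave w (tl xs) ys"
| "interleave (True # w) xs ys = hd ys # interleave w xs (tl ys)"

lemma length_interleave [simp]: "length (interleave w xs ys) = length w"
  by (induction w xs ys rule: interleave.induct) auto

lemma interleave_append:
  "length xs = count_list w False \<Longrightarrow> length ys = count_list w True \<Longrightarrow>
   interleave (w @ w') (xs @ xs') (ys @ ys') = interleave w xs ys @ interleave w' xs' ys'"
  by (induction w xs ys rule: interleave.induct) (auto simp: length_Suc_conv)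

lemma mset_interleave:
  "length xs = count_list w False \<Longrightarrow> length ys = count_list w True \<Longrightarrow>
   mset (interleave w xs ys) = mset xs + mset ys"
  by (induction w xs ys rule: interleave.induct) (auto simp: length_Suc_conv)

lemma interleave_map_filter: "interleave (map f R) (filter (\<lambda>e. \<not> f e) R) (filter f R) = R"
  by (induction R) auto

lemma map_filter_interleave:
  assumes "length xs = count_list w False" "length ys = count_list w True"
    "\<forall>e\<in>set xs. \<not> f e" "\<forall>e\<in>set ys. f e"
  shows "map f (interleave w xs ys) = w \<and> filter (\<lambda>e. \<not> f e) (interleave w xs ys) = xs
           \<and> filter f (interleave w xs ys) = ys"
  using assms by (induction w xs ys rule: interleave.induct) (auto simp: length_Suc_conv)

lemma count_list_False_add_True: "count_list w False + count_list w True = length w"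
  by (induction w) auto

definition bit_words :: "nat \<Rightarrow> nat \<Rightarrow> bool list set" where
  "bit_words a b = {w. count_list w False = a \<and> count_list w True = b}"

lemma finite_bit_words: "finite (bit_words a b)"
  by (rule finite_subset[OF _ finite_lists_length_eq[of UNIV "a + b"]])
     (auto simp: bit_words_def simp flip: count_list_False_add_True)

lemma bit_words_nonempty: "bit_words a b \<noteq> {}"
proof -
  have "replicate a False @ replicate b True \<in> bit_words a b"
    by (simp add: bit_words_def count_list_eq_length_filter)
  then show ?thesis
    by blast
qed

lemma interleave_permutations_of_set:
  assumes "X \<inter> Y = {}" "finite X" "finite Y" "w \<in> bit_words (card X) (card Y)"
    "P \<in> permutations_of_set X" "Q \<in> permutations_of_set Y"
  shows "map (\<lambda>e. e \<in> Y) (interleave w P Q) = w" "filter (\<lambda>e. e \<notin> Y) (interleave w P Q) = P"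
    "filter (\<lambda>e. e \<in> Y) (interleave w P Q) = Q" "interleave w P Q \<in> permutations_of_set (X \<union> Y)"
proof -
  have lengths: "length P = count_list w False" "length Q = count_list w True"
    using assms by (simp_all add: bit_words_def length_finite_permutations_of_set)
  then show "map (\<lambda>e. e \<in> Y) (interleave w P Q) = w" "filter (\<lambda>e. e \<notin> Y) (interleave w P Q) = P"
    "filter (\<lambda>e. e \<in> Y) (interleave w P Q) = Q"
    using assms map_filter_interleave[OF lengths, of "\<lambda>e. e \<in> Y"] by (auto simp: permutations_of_set_def)
  have "mset (interleave w P Q) = mset (P @ Q)"
    using mset_interleave[OF lengths] by simp
  moreover have "P @ Q \<in> permutations_of_set (X \<union> Y)"
    using assms by (auto simp: permutations_of_set_def)
  ultimately show "interleave w P Q \<in> permutations_of_set (X \<union> Y)"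
    by (rule permutations_of_set_mset_eq)
qed

lemma permutations_of_set_Un_eq_UN_interleave:
  assumes "X \<inter> Y = {}" "finite X" "finite Y"
  shows "permutations_of_set (X \<union> Y) = (\<Union>w\<in>bit_words (card X) (card Y).
           (\<lambda>(P, Q). interleave w P Q) ` (permutations_of_set X \<times> permutations_of_set Y))"
proof (intro equalityI subsetI)
  fix R assume R: "R \<in> permutations_of_set (X \<union> Y)"
  define P where "P = filter (\<lambda>e. e \<notin> Y) R"
  define Q where "Q = filter (\<lambda>e. e \<in> Y) R"
  have "distinct R" "set R = X \<union> Y"
    using R by (auto simp: permutations_of_set_def)
  then have P: "P \<in> permutations_of_set X" and Q: "Q \<in> permutations_of_set Y"
    using assms(1) by (auto simp: P_def Q_def permutations_of_set_def)
  have "length P = card X" "length Q = card Y"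
    using P Q assms(2,3) by (simp_all add: length_finite_permutations_of_set)
  then have "map (\<lambda>e. e \<in> Y) R \<in> bit_words (card X) (card Y)"
    by (simp add: bit_words_def count_list_eq_length_filter filter_map o_def P_def Q_def eq_commute)
  moreover have "R = interleave (map (\<lambda>e. e \<in> Y) R) P Q"
    by (simp add: P_def Q_def interleave_map_filter)
  ultimately show "R \<in> (\<Union>w\<in>bit_words (card X) (card Y).
           (\<lambda>(P, Q). interleave w P Q) ` (permutations_of_set X \<times> permutations_of_set Y))"
    using P Q by (intro UN_I) (auto intro: image_eqI[where x = "(P, Q)"])
next
  fix R assume "R \<in> (\<Union>w\<in>bit_words (card X) (card Y).
           (\<lambda>(P, Q). interleave w P Q) ` (permutations_of_set X \<times> permutations_of_set Y))"
  then obtain w P Q where "w \<in> bit_words (card X) (card Y)" "P \<in> permutations_of_set X"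
      "Q \<in> permutations_of_set Y" "R = interleave w P Q"
    by auto
  then show "R \<in> permutations_of_set (X \<union> Y)"
    using interleave_permutations_of_set(4)[OF assms] by simp
qed

lemma shuffled_Un_eq_interleave:
  assumes "X \<inter> Y = {}" "finite X" "finite Y"
  shows "shuffled (X \<union> Y) = bind_pmf (pmf_of_set (bit_words (card X) (card Y)))
           (\<lambda>w. bind_pmf (shuffled X) (\<lambda>P. map_pmf (interleave w P) (shuffled Y)))"
proof -
  define W where "W = bit_words (card X) (card Y)"
  define D where "D = permutations_of_set X \<times> permutations_of_set Y"
  note recover = interleave_permutations_of_set(1-3)[OF assms, folded W_def]
  have inj: "inj_on (case_prod (interleave w)) D" if w: "w \<in> W" for w
  proof (rule inj_onI, clarify)
    fix P Q P' Q' assume "(P, Q) \<in> D" "(P', Q') \<in> D" "interleave w P Q = interleave w P' Q'"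
    then show "P = P' \<and> Q = Q'"
      unfolding D_def by (metis SigmaE2 case_prod_conv recover(2,3)[OF w])
  qed
  have disjoint: "disjoint_family_on (\<lambda>w. case_prod (interleave w) ` D) W"
    unfolding disjoint_family_on_def
  proof (intro ballI impI)
    fix w w' assume w: "w \<in> W" and w': "w' \<in> W" and "w \<noteq> w'"
    have "w = w'" if R: "R \<in> case_prod (interleave w) ` D" "R \<in> case_prod (interleave w') ` D" for R
    proof -
      obtain p p' where "p \<in> D" "p' \<in> D"
          "R = case_prod (interleave w) p" "R = case_prod (interleave w') p'"
        using R by blast
      then show "w = w'"
        unfolding D_def by (metis SigmaE case_prod_conv recover(1) w w')
    qed
    then show "case_prod (interleave w) ` D \<inter> case_prod (interleave w') ` D = {}"
      using \<open>w \<noteq> w'\<close> by blast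
  qed
  have "D \<noteq> {}" "finite D"
    using assms by (auto simp: D_def)
  have "shuffled (X \<union> Y) = bind_pmf (pmf_of_set W) (\<lambda>w. pmf_of_set (case_prod (interleave w) ` D))"
    unfolding shuffled_def permutations_of_set_Un_eq_UN_interleave[OF assms, folded W_def D_def]
  proof (rule pmf_of_set_UN)
    show "finite (\<Union>w\<in>W. case_prod (interleave w) ` D)"
      using \<open>finite D\<close> by (simp add: W_def finite_bit_words)
    show "case_prod (interleave w) ` D \<noteq> {}" for w
      using \<open>D \<noteq> {}\<close> by simp
    show "card (case_prod (interleave w) ` D) = card D" if "w \<in> W" for w
      using inj[OF that] by (rule card_image)
  qed (simp_all add: W_def bit_words_nonempty disjoint[unfolded W_def])
  also have "\<dots> = bind_pmf (pmf_of_set W) (\<lambda>w. map_pmf (case_prod (interleave w)) (pmf_of_set D))"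
  proof (intro bind_pmf_cong refl)
    fix w assume "w \<in> set_pmf (pmf_of_set W)"
    then have "w \<in> W"
      by (simp add: W_def finite_bit_words bit_words_nonempty)
    then show "pmf_of_set (case_prod (interleave w) ` D) =
        map_pmf (case_prod (interleave w)) (pmf_of_set D)"
      using inj \<open>D \<noteq> {}\<close> \<open>finite D\<close> by (simp add: map_pmf_of_set_inj)
  qed
  also have "\<dots> = bind_pmf (pmf_of_set W)
                      (\<lambda>w. bind_pmf (shuffled X) (\<lambda>P. map_pmf (interleave w P) (shuffled Y)))"
    using assms
    by (simp add: D_def pmf_of_set_Times pair_pmf_def shuffled_def map_pmf_def
        bind_assoc_pmf bind_return_pmf)
  finally show ?thesis
    by (simp add: W_def)
qed

definition rotate_tail :: "nat \<Rightarrow> 'a list \<Rightarrow> 'a list" where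
  "rotate_tail k A = take k A @ rotate1 (drop k A)"

lemma length_rotate_tail: "length (rotate_tail k A) = length A"
  by (simp add: rotate_tail_def)

lemma rotate_tail_in_permutations_of_set:
  assumes "A \<in> permutations_of_set S"
  shows "rotate_tail k A \<in> permutations_of_set S"
proof -
  have "distinct (rotate_tail k A) = distinct (take k A @ drop k A)"
    "set (rotate_tail k A) = set (take k A @ drop k A)"
    by (simp_all only: rotate_tail_def distinct_append set_append distinct1_rotate set_rotate1)
  then show ?thesis
    using assms by (simp add: permutations_of_set_def)
qed

lemma inj_rotate_tail: "inj (rotate_tail k)"
proof (rule injI)
  fix A A' assume eq: "rotate_tail k A = rotate_tail k A'"
  have "length A = length A'"
    using arg_cong[OF eq, of length] by (simp add: length_rotate_tail)
  then have "take k A = take k A'" "rotate1 (drop k A) = rotate1 (drop k A')"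
    using eq by (simp_all add: rotate_tail_def append_eq_append_conv)
  then show "A = A'"
    by (metis append_take_drop_id inj_rotate1 injD)
qed

lemma map_pmf_rotate_tail_shuffled:
  assumes "finite S"
  shows "map_pmf (rotate_tail k) (shuffled S) = shuffled S"
proof -
  have "rotate_tail k ` permutations_of_set S = permutations_of_set S"
    using assms rotate_tail_in_permutations_of_set
    by (intro card_subset_eq) (auto simp: card_image inj_on_subset[OF inj_rotate_tail])
  then show ?thesis
    using assms by (simp add: shuffled_def map_pmf_of_set_inj inj_on_subset[OF inj_rotate_tail])
qed

text \<open>Up to a rotation of the remaining elements of \<open>A\<close>, \<open>merge_state L R A B w\<close> is the array
  reached by the first loop of \<open>Merge\<close> after drawing the bits \<open>w\<close>: a bit 0 leaves the next
  element of \<open>A\<close> in place, a bit 1 swaps the next element of \<open>B\<close> to the front of the remaining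
  elements of \<open>A\<close>, thereby rotating them by one.\<close>

definition merge_state :: "'a list \<Rightarrow> 'a list \<Rightarrow> 'a list \<Rightarrow> 'a list \<Rightarrow> bool list \<Rightarrow> 'a list" where
  "merge_state L R A B w =
     L @ interleave w (take (count_list w False) A) (take (count_list w True) B)
       @ drop (count_list w False) A @ drop (count_list w True) B @ R"

lemma merge_state_snoc_False:
  assumes "count_list w False < length A" "count_list w True \<le> length B"
  shows "merge_state L R A B (w @ [False]) = merge_state L R A B w"
proof -
  let ?x = "count_list w False" and ?y = "count_list w True"
  have "interleave (w @ [False]) (take ?x A @ [A ! ?x]) (take ?y B @ []) =
        interleave w (take ?x A) (take ?y B) @ [A ! ?x]"
    using assms by (subst interleave_append) auto
  then show ?thesis
    using assms by (simp add: merge_state_def take_Suc_conv_app_nth Cons_nth_drop_Suc)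
qed

lemma merge_state_snoc_True:
  assumes "count_list w False \<le> length A" "count_list w True < length B"
  shows "list_swap (merge_state L R A B w) (length L + length w) (length L + length A + count_list w True)
         = merge_state L R (rotate_tail (count_list w False) A) B (w @ [True])"
proof -
  let ?x = "count_list w False" and ?y = "count_list w True"
  let ?P = "L @ interleave w (take ?x A) (take ?y B)"
  have length_w: "length w = ?x + ?y"
    by (simp add: count_list_False_add_True)
  have interleave_snoc: "interleave (w @ [True]) (take ?x A @ []) (take ?y B @ [B ! ?y]) =
        interleave w (take ?x A) (take ?y B) @ [B ! ?y]"
    using assms by (subst interleave_append) auto
  have drop_B: "drop ?y B = B ! ?y # drop (Suc ?y) B"
    using assms by (simp add: Cons_nth_drop_Suc)
  show ?thesis
  proof (cases "?x < length A")
    case True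
    have drop_A: "drop ?x A = A ! ?x # drop (Suc ?x) A"
      using True by (simp add: Cons_nth_drop_Suc)
    have "merge_state L R A B w = ?P @ A ! ?x # drop (Suc ?x) A @ B ! ?y # drop (Suc ?y) B @ R"
      by (simp add: merge_state_def drop_A drop_B)
    moreover have "merge_state L R (rotate_tail ?x A) B (w @ [True]) =
        ?P @ B ! ?y # drop (Suc ?x) A @ A ! ?x # drop (Suc ?y) B @ R"
      using interleave_snoc assms True
      by (simp add: merge_state_def rotate_tail_def drop_A take_Suc_conv_app_nth)
    moreover have "length L + length w = length ?P"
      "length L + length A + ?y = length ?P + 1 + length (drop (Suc ?x) A)"
      using True length_w by simp_all
    ultimately show ?thesis
      by (simp only: list_swap_Cons_append_Cons)
  next
    case False
    then have "?x = length A"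
      using assms by simp
    then have "length L + length A + ?y = length L + length w" "rotate_tail ?x A = A"
      using length_w by (simp_all add: rotate_tail_def)
    moreover have "merge_state L R A B (w @ [True]) = merge_state L R A B w"
      using interleave_snoc drop_B \<open>?x = length A\<close> assms
      by (simp add: merge_state_def take_Suc_conv_app_nth)
    ultimately show ?thesis
      by (simp only: list_swap_same)
  qed
qed

subsection \<open>Averaging over the bits drawn by the first loop\<close>

lemma pmf_bind_fair_bit: "pmf (bind_pmf fair_bit f) x = (pmf (f False) x + pmf (f True) x) / 2"
  unfolding fair_bit_def bernoulli_pmf_half_conv_pmf_of_set
  by (subst pmf_bind_pmf_of_set) (auto simp: UNIV_bool)

locale merge_setting =
  fixes L R :: "'a list" and SA SB :: "'a set"
  assumes finite_SA: "finite SA" and finite_SB: "finite SB" and disjoint_SA_SB: "SA \<inter> SB = {}"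
begin

abbreviation end_index :: nat where
  "end_index \<equiv> length L + card SA + card SB"

definition window :: "'a list \<Rightarrow> 'a list" where
  "window T = take (card SA + card SB) (drop (length L) T)"

definition resume :: "'a list \<Rightarrow> 'a list \<Rightarrow> bool list \<Rightarrow> 'a list pmf" where
  "resume A B w =
     bind_pmf (merge_loop1 (merge_state L R A B w) (length L + length w)
                 (length L + card SA + count_list w True) end_index)
       (\<lambda>(T, i). merge_loop2 T (length L) i end_index)"

definition finish :: "'a list \<Rightarrow> 'a list \<Rightarrow> bool list \<Rightarrow> 'a list pmf" where
  "finish A B w = merge_loop2 (merge_state L R A B w) (length L) (length L + length w) end_index"

lemma resume_step:
  assumes A: "A \<in> permutations_of_set SA" and B: "B \<in> permutations_of_set SB"
    and x: "count_list w False \<le> card SA" and y: "count_list w True \<le> card SB"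
  shows "resume A B w = bind_pmf fair_bit (\<lambda>b.
           if b then
             if count_list w True = card SB then finish A B w
             else resume (rotate_tail (count_list w False) A) B (w @ [True])
           else
             if count_list w False = card SA then finish A B w
             else resume A B (w @ [False]))"
proof -
  let ?x = "count_list w False" and ?y = "count_list w True"
  let ?T = "merge_state L R A B w" and ?i = "length L + length w" and ?j = "length L + card SA + ?y"
  have length_A: "length A = card SA" and length_B: "length B = card SB"
    using A B by (simp_all add: length_finite_permutations_of_set)
  have length_w: "length w = ?x + ?y"
    by (simp add: count_list_False_add_True)
  have snoc_False: "merge_state L R A B (w @ [False]) = ?T" if "?x < card SA"
    using that length_A length_B y by (simp add: merge_state_snoc_False)
  have snoc_True: "list_swap ?T ?i ?j = merge_state L R (rotate_tail ?x A) B (w @ [True])"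
    if "?y < card SB"
    using that merge_state_snoc_True[of w A B L R] length_A length_B x by simp
  have "?i \<le> ?j \<and> ?j \<le> end_index"
    using length_w x y by simp
  then have "resume A B w = bind_pmf fair_bit (\<lambda>b. bind_pmf
      (if \<not> b then if ?i = ?j then return_pmf (?T, ?i) else merge_loop1 ?T (?i + 1) ?j end_index
       else if ?j = end_index then return_pmf (?T, ?i)
       else merge_loop1 (list_swap ?T ?i ?j) (?i + 1) (?j + 1) end_index)
      (\<lambda>(T, i). merge_loop2 T (length L) i end_index))"
    unfolding resume_def by (subst merge_loop1.simps) (simp only: simp_thms if_True bind_assoc_pmf)
  also have "\<dots> = bind_pmf fair_bit (\<lambda>b.
           if b then
             if ?y = card SB then finish A B w
             else resume (rotate_tail ?x A) B (w @ [True])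
           else
             if ?x = card SA then finish A B w
             else resume A B (w @ [False]))"
    using length_w x y snoc_False snoc_True
    by (intro bind_pmf_cong refl) (auto simp: finish_def resume_def bind_return_pmf add.assoc)
  finally show ?thesis .
qed

definition outcome :: "bool list \<Rightarrow> 'a list pmf" where
  "outcome w = map_pmf window (bind_pmf (shuffled SA) (\<lambda>A. bind_pmf (shuffled SB) (\<lambda>B. resume A B w)))"

definition outcome_stopped :: "bool list \<Rightarrow> 'a list pmf" where
  "outcome_stopped w = map_pmf window (bind_pmf (shuffled SA) (\<lambda>A. bind_pmf (shuffled SB) (\<lambda>B. finish A B w)))"

lemma outcome_step:
  assumes x: "count_list w False \<le> card SA" and y: "count_list w True \<le> card SB"
  shows "outcome w = bind_pmf fair_bit (\<lambda>b.
           if b then if count_list w True = card SB then outcome_stopped w else outcome (w @ [True])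
           else if count_list w False = card SA then outcome_stopped w else outcome (w @ [False]))"
proof -
  let ?x = "count_list w False" and ?y = "count_list w True"
  define G where "G = (\<lambda>b A B.
           if b then
             if ?y = card SB then finish A B w
             else resume (rotate_tail ?x A) B (w @ [True])
           else
             if ?x = card SA then finish A B w
             else resume A B (w @ [False]))"
  \<comment> \<open>The uniform shuffle of \<open>SA\<close> absorbs the rotation caused by a bit 1.\<close>
  have rotate: "bind_pmf (shuffled SA) (\<lambda>A. bind_pmf (shuffled SB) (\<lambda>B.
        resume (rotate_tail ?x A) B (w @ [True]))) =
      bind_pmf (shuffled SA) (\<lambda>A. bind_pmf (shuffled SB) (\<lambda>B. resume A B (w @ [True])))"
    using map_pmf_rotate_tail_shuffled[OF finite_SA, of ?x]
      bind_map_pmf[of "rotate_tail ?x" "shuffled SA" "\<lambda>A. bind_pmf (shuffled SB) (\<lambda>B. resume A B (w @ [True]))"]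
    by simp
  have "outcome w = map_pmf window (bind_pmf (shuffled SA) (\<lambda>A. bind_pmf (shuffled SB) (\<lambda>B.
          bind_pmf fair_bit (\<lambda>b. G b A B))))"
    unfolding outcome_def G_def using finite_SA finite_SB
    by (intro arg_cong[where f = "map_pmf window"] bind_pmf_cong refl) (simp add: resume_step x y)
  also have "\<dots> = map_pmf window (bind_pmf fair_bit (\<lambda>b. bind_pmf (shuffled SA) (\<lambda>A.
          bind_pmf (shuffled SB) (\<lambda>B. G b A B))))"
    by (simp add: bind_commute_pmf[of "shuffled SB" fair_bit] bind_commute_pmf[of "shuffled SA" fair_bit])
  also have "\<dots> = bind_pmf fair_bit (\<lambda>b.
           if b then if ?y = card SB then outcome_stopped w else outcome (w @ [True])
           else if ?x = card SA then outcome_stopped w else outcome (w @ [False]))"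
    unfolding map_bind_pmf[of window fair_bit]
    by (intro bind_pmf_cong refl) (simp add: G_def outcome_def outcome_stopped_def rotate)
  finally show ?thesis .
qed

lemma average_window_interleavings:
  assumes ZA: "ZA \<in> distinct_lists SA (card SA - x)" and ZB: "ZB \<in> distinct_lists SB (card SB - y)"
    and x: "x \<le> card SA" and y: "y \<le> card SB"
  shows "bind_pmf (pmf_of_set (bit_words x y)) (\<lambda>w. map_pmf window
           (bind_pmf (shuffled (SA - set ZA)) (\<lambda>PA. bind_pmf (shuffled (SB - set ZB)) (\<lambda>PB.
              merge_loop2 (L @ interleave w PA PB @ (ZA @ ZB) @ R) (length L) (length L + (x + y)) end_index))))
         = shuffled (SA \<union> SB)"
proof -
  let ?XA = "SA - set ZA" and ?XB = "SB - set ZB" and ?Z = "ZA @ ZB"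
  let ?F = "\<lambda>P. merge_loop2 (L @ P @ ?Z @ R) (length L) (length L + (x + y)) end_index"
  have card_XA: "card ?XA = x" and card_XB: "card ?XB = y"
    using ZA ZB x y finite_SA finite_SB by (simp_all add: distinct_lists_def card_Diff_subset distinct_card)
  have XA_XB: "?XA \<inter> ?XB = {}" "finite ?XA" "finite ?XB"
    using disjoint_SA_SB finite_SA finite_SB by auto
  have Z: "distinct ?Z" "set ?Z \<inter> (?XA \<union> ?XB) = {}" "(?XA \<union> ?XB) \<union> set ?Z = SA \<union> SB"
    "length ?Z = (card SA - x) + (card SB - y)"
    using ZA ZB disjoint_SA_SB by (auto simp: distinct_lists_def)
  have "bind_pmf (pmf_of_set (bit_words x y)) (\<lambda>w. bind_pmf (shuffled ?XA) (\<lambda>PA.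
          bind_pmf (shuffled ?XB) (\<lambda>PB. ?F (interleave w PA PB))))
        = bind_pmf (shuffled (?XA \<union> ?XB)) ?F"
    unfolding shuffled_Un_eq_interleave[OF XA_XB] card_XA card_XB
    by (simp add: bind_assoc_pmf bind_map_pmf)
  moreover have "map_pmf window (bind_pmf (shuffled (?XA \<union> ?XB)) ?F) = shuffled (SA \<union> SB)"
    using merge_loop2_shuffled[of "?XA \<union> ?XB" ?Z L R] XA_XB Z card_XA card_XB x y
    by (simp add: window_def[abs_def] card_Un_disjoint add.assoc)
  ultimately show ?thesis
    by (simp add: map_bind_pmf[symmetric])
qed

lemma outcome_stopped_split:
  assumes w: "w \<in> bit_words x y" and x: "x \<le> card SA" and y: "y \<le> card SB"
  shows "outcome_stopped w =
    bind_pmf (pmf_of_set (distinct_lists SA (card SA - x))) (\<lambda>ZA.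
    bind_pmf (pmf_of_set (distinct_lists SB (card SB - y))) (\<lambda>ZB. map_pmf window
      (bind_pmf (shuffled (SA - set ZA)) (\<lambda>PA. bind_pmf (shuffled (SB - set ZB)) (\<lambda>PB.
         merge_loop2 (L @ interleave w PA PB @ (ZA @ ZB) @ R) (length L) (length L + (x + y)) end_index)))))"
proof -
  have finish_append: "finish (PA @ ZA) (PB @ ZB) w =
      merge_loop2 (L @ interleave w PA PB @ (ZA @ ZB) @ R) (length L) (length L + (x + y)) end_index"
    if "PA \<in> permutations_of_set (SA - set ZA)" "PB \<in> permutations_of_set (SB - set ZB)"
      "ZA \<in> distinct_lists SA (card SA - x)" "ZB \<in> distinct_lists SB (card SB - y)" for PA PB ZA ZB
  proof -
    have "length PA = x" "length PB = y" "length w = x + y"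
      using that w x y finite_SA finite_SB
      by (simp_all add: length_finite_permutations_of_set distinct_lists_def card_Diff_subset distinct_card
          bit_words_def flip: count_list_False_add_True)
    then show ?thesis
      using w by (simp add: finish_def merge_state_def bit_words_def)
  qed
  have "outcome_stopped w = map_pmf window
    (bind_pmf (pmf_of_set (distinct_lists SA (card SA - x))) (\<lambda>ZA.
     bind_pmf (shuffled (SA - set ZA)) (\<lambda>PA.
     bind_pmf (pmf_of_set (distinct_lists SB (card SB - y))) (\<lambda>ZB.
     bind_pmf (shuffled (SB - set ZB)) (\<lambda>PB. finish (PA @ ZA) (PB @ ZB) w)))))"
    unfolding outcome_stopped_def
    by (subst shuffled_split_suffix[OF finite_SA, of "card SA - x"], simp,
        subst shuffled_split_suffix[OF finite_SB, of "card SB - y"], simp)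
       (simp add: bind_assoc_pmf bind_map_pmf)
  also have "\<dots> = map_pmf window
    (bind_pmf (pmf_of_set (distinct_lists SA (card SA - x))) (\<lambda>ZA.
     bind_pmf (pmf_of_set (distinct_lists SB (card SB - y))) (\<lambda>ZB.
     bind_pmf (shuffled (SA - set ZA)) (\<lambda>PA.
     bind_pmf (shuffled (SB - set ZB)) (\<lambda>PB. finish (PA @ ZA) (PB @ ZB) w)))))"
    by (simp add: bind_commute_pmf[of "shuffled (SA - set _)" "pmf_of_set (distinct_lists SB (card SB - y))"])
  also have "\<dots> = map_pmf window
    (bind_pmf (pmf_of_set (distinct_lists SA (card SA - x))) (\<lambda>ZA.
     bind_pmf (pmf_of_set (distinct_lists SB (card SB - y))) (\<lambda>ZB.
     bind_pmf (shuffled (SA - set ZA)) (\<lambda>PA.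
     bind_pmf (shuffled (SB - set ZB)) (\<lambda>PB.
       merge_loop2 (L @ interleave w PA PB @ (ZA @ ZB) @ R) (length L) (length L + (x + y)) end_index)))))"
    using finite_SA finite_SB x y
    by (intro arg_cong[where f = "map_pmf window"] bind_pmf_cong refl)
       (simp add: finish_append finite_distinct_lists distinct_lists_nonempty)
  finally show ?thesis
    by (simp only: map_bind_pmf)
qed

lemma average_outcome_stopped:
  assumes x: "x \<le> card SA" and y: "y \<le> card SB"
  shows "bind_pmf (pmf_of_set (bit_words x y)) outcome_stopped = shuffled (SA \<union> SB)"
proof -
  let ?H = "\<lambda>w ZA ZB. map_pmf window
      (bind_pmf (shuffled (SA - set ZA)) (\<lambda>PA. bind_pmf (shuffled (SB - set ZB)) (\<lambda>PB.
         merge_loop2 (L @ interleave w PA PB @ (ZA @ ZB) @ R) (length L) (length L + (x + y)) end_index)))"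
  have "bind_pmf (pmf_of_set (bit_words x y)) outcome_stopped =
    bind_pmf (pmf_of_set (bit_words x y)) (\<lambda>w.
      bind_pmf (pmf_of_set (distinct_lists SA (card SA - x))) (\<lambda>ZA.
      bind_pmf (pmf_of_set (distinct_lists SB (card SB - y))) (\<lambda>ZB. ?H w ZA ZB)))"
    using x y by (intro bind_pmf_cong refl)
      (simp add: outcome_stopped_split finite_bit_words bit_words_nonempty)
  also have "\<dots> =
      bind_pmf (pmf_of_set (distinct_lists SA (card SA - x))) (\<lambda>ZA.
      bind_pmf (pmf_of_set (distinct_lists SB (card SB - y))) (\<lambda>ZB.
      bind_pmf (pmf_of_set (bit_words x y)) (\<lambda>w. ?H w ZA ZB)))"
    by (simp add: bind_commute_pmf[of "pmf_of_set (bit_words x y)"])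
  also have "\<dots> =
      bind_pmf (pmf_of_set (distinct_lists SA (card SA - x))) (\<lambda>ZA.
      bind_pmf (pmf_of_set (distinct_lists SB (card SB - y))) (\<lambda>ZB. shuffled (SA \<union> SB)))"
  proof (intro bind_pmf_cong refl)
    fix ZA ZB
    assume "ZA \<in> set_pmf (pmf_of_set (distinct_lists SA (card SA - x)))"
      and "ZB \<in> set_pmf (pmf_of_set (distinct_lists SB (card SB - y)))"
    then show "bind_pmf (pmf_of_set (bit_words x y)) (\<lambda>w. ?H w ZA ZB) = shuffled (SA \<union> SB)"
      using finite_SA finite_SB x y
      by (intro average_window_interleavings) (simp_all add: finite_distinct_lists distinct_lists_nonempty)
  qed
  finally show ?thesis
    by simp
qed

definition histories :: "nat \<Rightarrow> bool list set" where
  "histories t = {w. length w = t \<and> count_list w False \<le> card SA \<and> count_list w True \<le> card SB}"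

lemma finite_histories: "finite (histories t)"
  by (rule finite_subset[OF _ finite_lists_length_eq[of UNIV t]]) (auto simp: histories_def)

lemma histories_0: "histories 0 = {[]}"
  by (auto simp: histories_def)

lemma histories_too_long: "histories (Suc (card SA + card SB)) = {}"
proof -
  have "length w \<noteq> Suc (card SA + card SB)"
    if "count_list w False \<le> card SA" "count_list w True \<le> card SB" for w
    using that count_list_False_add_True[of w] by linarith
  then show ?thesis
    by (auto simp: histories_def)
qed

lemma histories_Suc:
  "histories (Suc t) = (\<lambda>w. w @ [False]) ` {w \<in> histories t. count_list w False < card SA}
                     \<union> (\<lambda>w. w @ [True]) ` {w \<in> histories t. count_list w True < card SB}"
proof (intro equalityI subsetI)
  fix v assume v: "v \<in> histories (Suc t)"
  then have "v \<noteq> []"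
    by (auto simp: histories_def)
  then obtain w b where "v = w @ [b]"
    by (metis append_butlast_last_id)
  then show "v \<in> (\<lambda>w. w @ [False]) ` {w \<in> histories t. count_list w False < card SA}
               \<union> (\<lambda>w. w @ [True]) ` {w \<in> histories t. count_list w True < card SB}"
    using v by (cases b) (auto simp: histories_def)
qed (auto simp: histories_def)

lemma sum_outcome_stopped_deviation:
  "(\<Sum>w\<in>{w \<in> histories t. count_list w False = x \<and> count_list w True = y}.
     pmf (outcome_stopped w) z - pmf (shuffled (SA \<union> SB)) z) = 0"
proof (cases "x \<le> card SA \<and> y \<le> card SB \<and> x + y = t")
  case True
  then have eq: "{w \<in> histories t. count_list w False = x \<and> count_list w True = y} = bit_words x y"
    by (auto simp: histories_def bit_words_def simp flip: count_list_False_add_True)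
  have "(\<Sum>w\<in>bit_words x y. pmf (outcome_stopped w) z) / card (bit_words x y) =
      pmf (shuffled (SA \<union> SB)) z"
    using arg_cong[OF average_outcome_stopped[of x y], of "\<lambda>p. pmf p z"] True
    by (simp add: pmf_bind_pmf_of_set finite_bit_words bit_words_nonempty)
  then show ?thesis
    unfolding eq using finite_bit_words bit_words_nonempty
    by (simp add: sum_subtractf field_simps card_gt_0_iff)
next
  case False
  then have empty: "{w \<in> histories t. count_list w False = x \<and> count_list w True = y} = {}"
    by (auto simp: histories_def simp flip: count_list_False_add_True)
  show ?thesis
    unfolding empty by simp
qed

lemma sum_outcome_deviation_Suc:
  "(\<Sum>w\<in>histories t. pmf (outcome w) z - pmf (shuffled (SA \<union> SB)) z) =
   (\<Sum>w\<in>histories (Suc t). pmf (outcome w) z - pmf (shuffled (SA \<union> SB)) z) / 2"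
proof -
  define d where "d w = pmf (outcome w) z - pmf (shuffled (SA \<union> SB)) z" for w
  define e where "e w = pmf (outcome_stopped w) z - pmf (shuffled (SA \<union> SB)) z" for w
  let ?H = "histories t"
  let ?HF = "{w \<in> ?H. count_list w False < card SA}" and ?HT = "{w \<in> ?H. count_list w True < card SB}"
  have "d w = ((if count_list w False = card SA then e w else d (w @ [False]))
             + (if count_list w True = card SB then e w else d (w @ [True]))) / 2" if "w \<in> ?H" for w
    using that outcome_step[of w]
    by (simp add: histories_def d_def e_def pmf_bind_fair_bit if_distrib[of "\<lambda>p. pmf p z"] field_simps)
  then have "(\<Sum>w\<in>?H. d w) = (\<Sum>w\<in>?H. ((if count_list w False = card SA then e w else d (w @ [False]))
             + (if count_list w True = card SB then e w else d (w @ [True]))) / 2)"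
    by (rule sum.cong[OF refl])
  also have "\<dots> = ((\<Sum>w\<in>?H. if count_list w False = card SA then e w else d (w @ [False]))
      + (\<Sum>w\<in>?H. if count_list w True = card SB then e w else d (w @ [True]))) / 2"
    by (simp only: sum.distrib flip: sum_divide_distrib)
  also have "(\<Sum>w\<in>?H. if count_list w False = card SA then e w else d (w @ [False])) =
      (\<Sum>w\<in>{w \<in> ?H. count_list w False = card SA \<and> count_list w True = t - card SA}. e w)
      + (\<Sum>w\<in>?HF. d (w @ [False]))"
  proof -
    have "{w \<in> ?H. count_list w False = card SA} =
        {w \<in> ?H. count_list w False = card SA \<and> count_list w True = t - card SA}"
      by (auto simp: histories_def simp flip: count_list_False_add_True)
    moreover have "{w \<in> ?H. count_list w False \<noteq> card SA} = ?HF"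
      by (auto simp: histories_def)
    ultimately show ?thesis
      using finite_histories[of t] by (simp add: sum.If_cases Int_def)
  qed
  also have "(\<Sum>w\<in>?H. if count_list w True = card SB then e w else d (w @ [True])) =
      (\<Sum>w\<in>{w \<in> ?H. count_list w False = t - card SB \<and> count_list w True = card SB}. e w)
      + (\<Sum>w\<in>?HT. d (w @ [True]))"
  proof -
    have "{w \<in> ?H. count_list w True = card SB} =
        {w \<in> ?H. count_list w False = t - card SB \<and> count_list w True = card SB}"
      by (auto simp: histories_def simp flip: count_list_False_add_True)
    moreover have "{w \<in> ?H. count_list w True \<noteq> card SB} = ?HT"
      by (auto simp: histories_def)
    ultimately show ?thesis
      using finite_histories[of t] by (simp add: sum.If_cases Int_def)
  qed
  finally have "(\<Sum>w\<in>?H. d w) = ((\<Sum>w\<in>?HF. d (w @ [False])) + (\<Sum>w\<in>?HT. d (w @ [True]))) / 2"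
    using sum_outcome_stopped_deviation by (simp add: e_def)
  also have "(\<Sum>w\<in>?HF. d (w @ [False])) + (\<Sum>w\<in>?HT. d (w @ [True])) = (\<Sum>w\<in>histories (Suc t). d w)"
    unfolding histories_Suc using finite_histories[of t]
    by (subst sum.union_disjoint) (auto simp: sum.reindex inj_on_def)
  finally show ?thesis
    by (simp add: d_def)
qed

lemma outcome_Nil: "outcome [] = shuffled (SA \<union> SB)"
proof (rule pmf_eqI)
  fix z
  have "pmf (outcome []) z - pmf (shuffled (SA \<union> SB)) z =
      (\<Sum>w\<in>histories t. pmf (outcome w) z - pmf (shuffled (SA \<union> SB)) z) / 2 ^ t" for t
  proof (induction t)
    case 0
    then show ?case
      by (simp add: histories_0)
  next
    case (Suc t)
    then show ?case
      using sum_outcome_deviation_Suc[where t = t and z = z] by simp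
  qed
  from this[of "Suc (card SA + card SB)"] show "pmf (outcome []) z = pmf (shuffled (SA \<union> SB)) z"
    by (simp add: histories_too_long)
qed

end

theorem mainTheorem1:
  fixes L R :: "'a list" and SA SB :: "'a set"
  assumes "finite SA" and "finite SB" and "SA \<inter> SB = {}"
  shows "map_pmf (\<lambda>T. take (card SA + card SB) (drop (length L) T))
           (bind_pmf (shuffled SA) (\<lambda>A. bind_pmf (shuffled SB) (\<lambda>B.
              Merge (L @ A @ B @ R) (length L) (card SA) (card SB))))
         = shuffled (SA \<union> SB)"
proof -
  interpret merge_setting L R SA SB
    using assms by unfold_locales
  have "resume A B [] = Merge (L @ A @ B @ R) (length L) (card SA) (card SB)" for A B
    by (simp add: resume_def Merge_def merge_state_def)
  then show ?thesis
    using outcome_Nil by (simp add: outcome_def window_def[abs_def])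
qed

end
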